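(* Let $d\ge 3$, $2\le k\le d$ and $n\ge d$. Then $\chi^{\mathsf{s}}_{d,k}(n)=n$.
   Context: A $k$-uniform hypergraph $H=(V,E)$ consists of a finite set $V$ and $E\subseteq\binom{V}{k}$. A (linear) embedding of $H$ into $\mathbb{R}^d$ is a map $\phi:V(H)\to\mathbb{R}^d$ with $\dim\operatorname{aff}\phi(e)=k-1$ for every edge $e$ and $\operatorname{conv}\phi(e_1)\cap\operatorname{conv}\phi(e_2)=\operatorname{conv}\phi(e_1\cap e_2)$ for all edges $e_1,e_2$. $\mathcal{E}_{d,k}$ is the set of $k$-uniform hypergraphs admitting such an embedding into $\mathbb{R}^d$. A strong $c$-coloring of $H$ is a map $\kappa:V(H)\to\{1,\dots,c\}$ with $|\kappa(e)|=k$ for every edge $e$; $\chi^{\mathsf{s}}(H)$ is the least such $c$. $\chi^{\mathsf{s}}_{d,k}(n)=\max\{\chi^{\mathsf{s}}(H): H\in\mathcal{E}_{d,k},\ |V(H)|=n\}$. *)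

theory Defs
  imports "HOL-Analysis.Analysis"
begin

definition k_uniform :: "nat \<Rightarrow> 'v set \<Rightarrow> 'v set set \<Rightarrow> bool" where
  "k_uniform k V E \<longleftrightarrow> finite V \<and> E \<subseteq> {e. e \<subseteq> V \<and> card e = k}"

definition linear_embedding :: "nat \<Rightarrow> 'v set \<Rightarrow> 'v set set \<Rightarrow> ('v \<Rightarrow> 'a::euclidean_space) \<Rightarrow> bool" where
  "linear_embedding k V E \<phi> \<longleftrightarrow>
     (\<forall>e\<in>E. aff_dim (\<phi> ` e) = int k - 1) \<and>
     (\<forall>e1\<in>E. \<forall>e2\<in>E. convex hull (\<phi> ` e1) \<inter> convex hull (\<phi> ` e2) = convex hull (\<phi> ` (e1 \<inter> e2)))"

text \<open>Membership in E_{d,k}, where R^d is the type real^'d (d = CARD('d)).\<close>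
definition embeddable :: "'d::finite itself \<Rightarrow> nat \<Rightarrow> 'v set \<Rightarrow> 'v set set \<Rightarrow> bool" where
  "embeddable _ k V E \<longleftrightarrow> k_uniform k V E \<and> (\<exists>\<phi> :: 'v \<Rightarrow> real^'d. linear_embedding k V E \<phi>)"

definition strong_coloring :: "nat \<Rightarrow> 'v set \<Rightarrow> 'v set set \<Rightarrow> nat \<Rightarrow> ('v \<Rightarrow> nat) \<Rightarrow> bool" where
  "strong_coloring k V E c \<kappa> \<longleftrightarrow> (\<forall>v\<in>V. \<kappa> v \<in> {1..c}) \<and> (\<forall>e\<in>E. card (\<kappa> ` e) = k)"

definition strong_chromatic :: "nat \<Rightarrow> 'v set \<Rightarrow> 'v set set \<Rightarrow> nat" where
  "strong_chromatic k V E = (LEAST c. \<exists>\<kappa>. strong_coloring k V E c \<kappa>)"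

text \<open>chi^s_{d,k}(n); hypergraphs are taken with vertices in nat (every finite hypergraph
  is isomorphic to one of these).\<close>
definition chi_s :: "'d::finite itself \<Rightarrow> nat \<Rightarrow> nat \<Rightarrow> nat" where
  "chi_s D k n = Max {strong_chromatic k V E | (V :: nat set) E.
       embeddable D k V E \<and> card V = n}"

end

theory Submission
  imports Defs "HOL-Computational_Algebra.Polynomial"
begin

text \<open>Place the vertices \<open>1, \<dots>, n\<close> on the moment curve \<open>t \<mapsto> (t, t\<^sup>2, \<dots>, t\<^sup>d)\<close> and take as
  edges the \<open>k\<close>-sets \<open>S\<close> that are cut out by a monic polynomial \<open>P\<close> of degree \<open>d + 1\<close>, i.e.
  \<open>P \<ge> 0\<close> on \<open>{1..n}\<close> with zero set \<open>S\<close> there. Writing \<open>P(t) = t\<^bsup>d+1\<^esup> - g(t)\<close> with \<open>deg g \<le> d\<close>,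
  the polynomial \<open>g\<close> is an affine functional on the moment curve, so each edge is a lower face
  of the point set lifted by the heights \<open>v\<^bsup>d+1\<^esup>\<close>; two lower faces meet in the lower face of
  their intersection, which gives the intersection condition, and at most \<open>d + 1\<close> points
  of the moment curve are affinely independent, which gives the dimension condition.
  Products of squared linear factors over runs of consecutive integers show that every
  two vertices lie in a common edge. Hence a strong colouring must be injective, and the
  strong chromatic number is \<open>n\<close>, which is also the trivial upper bound.\<close>

section \<open>The moment curve\<close>

definition coord_index :: "'d::finite \<Rightarrow> nat" where
  "coord_index = (SOME h. bij_betw h UNIV {0..<CARD('d)})"

lemma bij_coord_index: "bij_betw (coord_index :: 'd::finite \<Rightarrow> nat) UNIV {0..<CARD('d)}"
proof -
  have "\<exists>h. bij_betw h (UNIV::'d set) {0..<CARD('d)}"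
    using ex_bij_betw_finite_nat[of "UNIV::'d set"] by simp
  then show ?thesis unfolding coord_index_def by (rule someI_ex)
qed

definition moment_curve :: "real \<Rightarrow> real^'d::finite" where
  "moment_curve t = (\<chi> i. t ^ (coord_index i + 1))"

lemma poly_affine_on_moment_curve:
  fixes g :: "real poly"
  assumes "degree g \<le> CARD('d::finite)"
  obtains a :: "real^'d" and c where "\<And>t. inner a (moment_curve t) + c = poly g t"
proof
  define a :: "real^'d" where "a = (\<chi> i. coeff g (coord_index i + 1))"
  fix t
  have "inner a (moment_curve t) =
      (\<Sum>i\<in>(UNIV::'d set). coeff g (coord_index i + 1) * t ^ (coord_index i + 1))"
    by (simp add: inner_vec_def a_def moment_curve_def)
  also have "\<dots> = (\<Sum>m<CARD('d). coeff g (m + 1) * t ^ (m + 1))"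
    using sum.reindex_bij_betw[OF bij_coord_index, of "\<lambda>m. coeff g (m + 1) * t ^ (m + 1)"]
    by (simp add: atLeast0LessThan)
  finally have "inner a (moment_curve t) + coeff g 0 = (\<Sum>m<Suc CARD('d). coeff g m * t ^ m)"
    unfolding sum.lessThan_Suc_shift by simp
  also have "\<dots> = (\<Sum>m\<le>degree g. coeff g m * t ^ m)"
    using assms by (intro sum.mono_neutral_right) (auto simp: coeff_eq_0)
  also have "\<dots> = poly g t"
    by (simp add: poly_altdef)
  finally show "inner a (moment_curve t) + coeff g 0 = poly g t" .
qed

lemma inj_moment_curve: "inj (moment_curve :: real \<Rightarrow> real^'d::finite)"
proof
  fix s t :: real
  assume st: "(moment_curve s :: real^'d) = moment_curve t"
  obtain a :: "real^'d" and c where ac: "\<And>t. inner a (moment_curve t) + c = poly [:0, 1:] t"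
    using poly_affine_on_moment_curve[of "[:0, 1:]"] by auto
  have "s = inner a (moment_curve s) + c"
    using ac[of s] by simp
  also have "\<dots> = t"
    using ac[of t] st by simp
  finally show "s = t" .
qed

text \<open>The product of the factors \<open>t - w\<close> for \<open>w \<in> S - {v}\<close> has degree at most \<open>d\<close>, so it is an
  affine functional on the moment curve that vanishes on \<open>S\<close> except at \<open>v\<close>.\<close>
lemma affine_independent_moment_curve:
  fixes S :: "real set"
  assumes "finite S" and "card S \<le> CARD('d::finite) + 1"
  shows "\<not> affine_dependent (moment_curve ` S :: (real^'d) set)"
proof
  assume "affine_dependent (moment_curve ` S :: (real^'d) set)"
  then obtain v where v: "v \<in> S"
    and v_hull: "(moment_curve v :: real^'d) \<in> affine hull (moment_curve ` (S - {v}))"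
    unfolding affine_dependent_def using inj_moment_curve[where 'd='d]
    by (auto simp: image_set_diff)
  define g where "g = (\<Prod>w\<in>S - {v}. [:- w, 1:])"
  have "degree g = card (S - {v})"
    unfolding g_def by (subst degree_prod_eq_sum_degree) auto
  also have "\<dots> \<le> CARD('d)"
    using assms v by auto
  finally obtain a :: "real^'d" and c where ac: "\<And>t. inner a (moment_curve t) + c = poly g t"
    using poly_affine_on_moment_curve by blast
  have "(moment_curve ` (S - {v}) :: (real^'d) set) \<subseteq> {y. inner a y = - c}"
  proof
    fix y :: "real^'d"
    assume "y \<in> moment_curve ` (S - {v})"
    then obtain w where "w \<in> S" "w \<noteq> v" "y = moment_curve w"
      by auto
    moreover have "poly g w = 0"
      unfolding g_def poly_prod using \<open>w \<in> S\<close> \<open>w \<noteq> v\<close> assms(1) by (subst prod_zero_iff) auto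
    ultimately show "y \<in> {y. inner a y = - c}"
      using ac[of w] by (simp add: eq_neg_iff_add_eq_0)
  qed
  then have "affine hull (moment_curve ` (S - {v})) \<subseteq> {y. inner a y = - c}"
    using affine_hyperplane by (rule hull_minimal)
  with v_hull have "poly g v = 0"
    using ac[of v] by auto
  moreover have "poly g v \<noteq> 0"
    unfolding g_def poly_prod using assms(1) by (subst prod_zero_iff) auto
  ultimately show False
    by contradiction
qed

lemma aff_dim_moment_curve:
  fixes S :: "real set"
  assumes "finite S" and "card S \<le> CARD('d::finite) + 1"
  shows "aff_dim (moment_curve ` S :: (real^'d) set) = int (card S) - 1"
proof -
  have "card (moment_curve ` S :: (real^'d) set) = card S"
    using inj_moment_curve by (rule card_image[OF inj_on_subset]) simp
  then show ?thesis
    using aff_dim_affine_independent[OF affine_independent_moment_curve[OF assms]] by simp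
qed

section \<open>Lower faces of a lifted point configuration\<close>

text \<open>\<open>S\<close> is the set of points of \<open>\<phi> ` V\<close> whose lifts \<open>(\<phi> v, f v)\<close> lie on a non-vertical
  hyperplane that supports the lifted configuration from below.\<close>
definition lifted_face :: "('v \<Rightarrow> real) \<Rightarrow> ('v \<Rightarrow> 'a::real_inner) \<Rightarrow> 'v set \<Rightarrow> 'v set \<Rightarrow> bool" where
  "lifted_face f \<phi> V S \<longleftrightarrow>
     (\<exists>a c. \<forall>v\<in>V. inner a (\<phi> v) + c \<le> f v \<and> (f v = inner a (\<phi> v) + c \<longleftrightarrow> v \<in> S))"

lemma convex_hull_image_inj_iff:
  fixes \<phi> :: "'v \<Rightarrow> 'a::real_vector"
  assumes "finite S" and "inj_on \<phi> S"
  shows "x \<in> convex hull (\<phi> ` S) \<longleftrightarrow>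
    (\<exists>l. (\<forall>v\<in>S. 0 \<le> l v) \<and> sum l S = 1 \<and> (\<Sum>v\<in>S. l v *\<^sub>R \<phi> v) = x)"
proof -
  have "x \<in> convex hull (\<phi> ` S) \<longleftrightarrow>
    (\<exists>u. (\<forall>v\<in>S. 0 \<le> u (\<phi> v)) \<and> (\<Sum>v\<in>S. u (\<phi> v)) = 1 \<and> (\<Sum>v\<in>S. u (\<phi> v) *\<^sub>R \<phi> v) = x)"
    using assms by (simp add: convex_hull_finite sum.reindex)
  also have "\<dots> \<longleftrightarrow> (\<exists>l. (\<forall>v\<in>S. 0 \<le> l v) \<and> sum l S = 1 \<and> (\<Sum>v\<in>S. l v *\<^sub>R \<phi> v) = x)"
  proof
    assume "\<exists>l. (\<forall>v\<in>S. 0 \<le> l v) \<and> sum l S = 1 \<and> (\<Sum>v\<in>S. l v *\<^sub>R \<phi> v) = x"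
    then obtain l where "(\<forall>v\<in>S. 0 \<le> l v) \<and> sum l S = 1 \<and> (\<Sum>v\<in>S. l v *\<^sub>R \<phi> v) = x" ..
    moreover have "l (inv_into S \<phi> (\<phi> v)) = l v" if "v \<in> S" for v
      using assms(2) that by simp
    ultimately show "\<exists>u. (\<forall>v\<in>S. 0 \<le> u (\<phi> v)) \<and> (\<Sum>v\<in>S. u (\<phi> v)) = 1 \<and>
        (\<Sum>v\<in>S. u (\<phi> v) *\<^sub>R \<phi> v) = x"
      by (intro exI[of _ "l \<circ> inv_into S \<phi>"]) simp
  qed (auto simp: o_def)
  finally show ?thesis .
qed

lemma sum_weighted_affine_residual:
  fixes \<phi> :: "'v \<Rightarrow> 'a::real_inner"
  assumes "sum l A = 1" and "(\<Sum>v\<in>A. l v *\<^sub>R \<phi> v) = x"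
  shows "(\<Sum>v\<in>A. l v * (f v - (inner a (\<phi> v) + c))) = (\<Sum>v\<in>A. l v * f v) - (inner a x + c)"
proof -
  have "(\<Sum>v\<in>A. l v * inner a (\<phi> v)) = inner a x"
    using assms(2) by (auto simp: inner_sum_right)
  moreover have "(\<Sum>v\<in>A. l v * c) = c"
    using assms(1) by (simp flip: sum_distrib_right)
  ultimately show ?thesis
    by (simp add: algebra_simps sum_subtractf sum.distrib)
qed

text \<open>The average height \<open>\<Sum>\<^sub>v m v * f v\<close> of a point \<open>x\<close> over \<open>T\<close> equals the height of \<open>T\<close>'s
  supporting hyperplane at \<open>x\<close>; it is at least the height of \<open>S\<close>'s supporting hyperplane, with
  equality only if \<open>m\<close> vanishes off \<open>S\<close>. Swapping the roles of \<open>S\<close> and \<open>T\<close> forces equality.\<close>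
lemma lifted_face_weights_vanish:
  fixes \<phi> :: "'v \<Rightarrow> 'a::real_inner"
  assumes "finite V" and "inj_on \<phi> V" and "S \<subseteq> V" and "T \<subseteq> V"
    and "lifted_face f \<phi> V S" and "lifted_face f \<phi> V T"
    and "x \<in> convex hull (\<phi> ` S)"
    and m: "\<forall>v\<in>T. 0 \<le> m v" "sum m T = 1" "(\<Sum>v\<in>T. m v *\<^sub>R \<phi> v) = x"
  shows "\<forall>v\<in>T - S. m v = 0"
proof -
  obtain aS cS where S: "\<forall>v\<in>V. inner aS (\<phi> v) + cS \<le> f v \<and> (f v = inner aS (\<phi> v) + cS \<longleftrightarrow> v \<in> S)"
    using assms(5) unfolding lifted_face_def by blast
  obtain aT cT where T: "\<forall>v\<in>V. inner aT (\<phi> v) + cT \<le> f v \<and> (f v = inner aT (\<phi> v) + cT \<longleftrightarrow> v \<in> T)"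
    using assms(6) unfolding lifted_face_def by blast
  have "finite S" and "finite T"
    using assms(1,3,4) finite_subset by auto
  obtain l where l: "\<forall>v\<in>S. 0 \<le> l v" "sum l S = 1" "(\<Sum>v\<in>S. l v *\<^sub>R \<phi> v) = x"
    using convex_hull_image_inj_iff[OF \<open>finite S\<close> inj_on_subset[OF assms(2,3)]] assms(7) by blast
  define resS where "resS v = f v - (inner aS (\<phi> v) + cS)" for v
  define resT where "resT v = f v - (inner aT (\<phi> v) + cT)" for v
  have resS: "resS v \<ge> 0" "resS v = 0 \<longleftrightarrow> v \<in> S" if "v \<in> V" for v
    using S that unfolding resS_def by auto
  have resT: "resT v \<ge> 0" "resT v = 0 \<longleftrightarrow> v \<in> T" if "v \<in> V" for v
    using T that unfolding resT_def by auto
  have "(\<Sum>v\<in>S. l v * resS v) = 0"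
    using resS(2) assms(3) by (intro sum.neutral) auto
  moreover have "(\<Sum>v\<in>T. m v * resT v) = 0"
    using resT(2) assms(4) by (intro sum.neutral) auto
  moreover have "(\<Sum>v\<in>S. l v * resT v) \<ge> 0"
    using l(1) resT(1) assms(3) by (intro sum_nonneg) auto
  moreover have nonneg: "m v * resS v \<ge> 0" if "v \<in> T" for v
    using m(1) resS(1) assms(4) that by auto
  then have "(\<Sum>v\<in>T. m v * resS v) \<ge> 0"
    by (rule sum_nonneg)
  moreover have "(\<Sum>v\<in>S. l v * resS v) = (\<Sum>v\<in>S. l v * f v) - (inner aS x + cS)"
    and "(\<Sum>v\<in>S. l v * resT v) = (\<Sum>v\<in>S. l v * f v) - (inner aT x + cT)"
    and "(\<Sum>v\<in>T. m v * resS v) = (\<Sum>v\<in>T. m v * f v) - (inner aS x + cS)"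
    and "(\<Sum>v\<in>T. m v * resT v) = (\<Sum>v\<in>T. m v * f v) - (inner aT x + cT)"
    unfolding resS_def resT_def by (intro sum_weighted_affine_residual l(2,3) m(2,3))+
  ultimately have "(\<Sum>v\<in>T. m v * resS v) = 0"
    by linarith
  then have products_zero: "\<forall>v\<in>T. m v * resS v = 0"
    using sum_nonneg_eq_0_iff[OF \<open>finite T\<close> nonneg] by simp
  show ?thesis
  proof
    fix v
    assume "v \<in> T - S"
    then have "resS v \<noteq> 0" and "m v * resS v = 0"
      using resS(2) assms(4) products_zero by blast+
    then show "m v = 0"
      by simp
  qed
qed

lemma convex_hull_inter_lifted_faces:
  fixes \<phi> :: "'v \<Rightarrow> 'a::real_inner"
  assumes "finite V" and "inj_on \<phi> V" and "S \<subseteq> V" and "T \<subseteq> V"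
    and "lifted_face f \<phi> V S" and "lifted_face f \<phi> V T"
  shows "convex hull (\<phi> ` S) \<inter> convex hull (\<phi> ` T) = convex hull (\<phi> ` (S \<inter> T))"
proof
  show "convex hull (\<phi> ` (S \<inter> T)) \<subseteq> convex hull (\<phi> ` S) \<inter> convex hull (\<phi> ` T)"
    by (simp add: hull_mono image_mono)
next
  show "convex hull (\<phi> ` S) \<inter> convex hull (\<phi> ` T) \<subseteq> convex hull (\<phi> ` (S \<inter> T))"
  proof
    fix x
    assume x: "x \<in> convex hull (\<phi> ` S) \<inter> convex hull (\<phi> ` T)"
    have "finite T" and inj_T: "inj_on \<phi> T"
      using assms(1,2,4) finite_subset inj_on_subset by auto
    then obtain m where m: "\<forall>v\<in>T. 0 \<le> m v" "sum m T = 1" "(\<Sum>v\<in>T. m v *\<^sub>R \<phi> v) = x"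
      using convex_hull_image_inj_iff x by blast
    have vanish: "\<forall>v\<in>T - S \<inter> T. m v = 0"
      using lifted_face_weights_vanish[OF assms _ m] x by blast
    have "sum m (S \<inter> T) = sum m T"
      using vanish by (intro sum.mono_neutral_left \<open>finite T\<close>) auto
    moreover have "(\<Sum>v\<in>S \<inter> T. m v *\<^sub>R \<phi> v) = (\<Sum>v\<in>T. m v *\<^sub>R \<phi> v)"
      using vanish by (intro sum.mono_neutral_left \<open>finite T\<close>) auto
    ultimately have "sum m (S \<inter> T) = 1" and "(\<Sum>v\<in>S \<inter> T. m v *\<^sub>R \<phi> v) = x"
      using m(2,3) by simp_all
    then show "x \<in> convex hull (\<phi> ` (S \<inter> T))"
      using convex_hull_image_inj_iff[of "S \<inter> T" \<phi>] \<open>finite T\<close> inj_T m(1)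
      by (auto intro: inj_on_subset)
  qed
qed

section \<open>Sets of integers cut out by monic polynomials\<close>

definition monic_cut_out :: "nat \<Rightarrow> nat set \<Rightarrow> nat set \<Rightarrow> bool" where
  "monic_cut_out D V S \<longleftrightarrow> (\<exists>P::real poly. degree P \<le> D + 1 \<and> coeff P (D + 1) = 1 \<and>
     (\<forall>v\<in>V. poly P (real v) \<ge> 0 \<and> (poly P (real v) = 0 \<longleftrightarrow> v \<in> S)))"

lemma monic_cut_out_imp_lifted_face:
  assumes "monic_cut_out CARD('d::finite) V S"
  shows "lifted_face (\<lambda>v. real v ^ (CARD('d) + 1)) (\<lambda>v. moment_curve (real v) :: real^'d) V S"
proof -
  obtain P :: "real poly" where P: "degree P \<le> CARD('d) + 1" "coeff P (CARD('d) + 1) = 1"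
    "\<forall>v\<in>V. poly P (real v) \<ge> 0 \<and> (poly P (real v) = 0 \<longleftrightarrow> v \<in> S)"
    using assms unfolding monic_cut_out_def by blast
  define g where "g = monom 1 (CARD('d) + 1) - P"
  have "degree g \<le> CARD('d)"
  proof (rule degree_le, intro allI impI)
    fix i
    assume "CARD('d) < i"
    then show "coeff g i = 0"
      using P(1,2) by (cases "i = CARD('d) + 1") (auto simp: g_def coeff_eq_0)
  qed
  then obtain a :: "real^'d" and c where ac: "\<And>t. inner a (moment_curve t) + c = poly g t"
    using poly_affine_on_moment_curve by blast
  have "real v ^ (CARD('d) + 1) - (inner a (moment_curve (real v)) + c) = poly P (real v)" for v
    using ac[of "real v"] by (simp add: g_def poly_monom)
  then show ?thesis
    unfolding lifted_face_def using P(3) by (intro exI[of _ a] exI[of _ c]) (smt (verit))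
qed

text \<open>Pairing consecutive roots \<open>j, j + 1\<close> keeps the product nonnegative at every integer; a lone
  last root is squared.\<close>
fun run_poly :: "nat \<Rightarrow> nat \<Rightarrow> real poly" where
  "run_poly r 0 = 1"
| "run_poly r (Suc 0) = [:- real r, 1:] ^ 2"
| "run_poly r (Suc (Suc L)) = [:- real r, 1:] * [:- real (Suc r), 1:] * run_poly (Suc (Suc r)) L"

lemma run_poly_nonzero: "run_poly r L \<noteq> 0"
  by (induction r L rule: run_poly.induct)
    (simp_all only: run_poly.simps mult_eq_0_iff power_eq_0_iff pCons_eq_0_iff, simp_all)

lemma degree_run_poly: "degree (run_poly r L) = L + L mod 2"
proof (induction r L rule: run_poly.induct)
  case (3 r L)
  have pair: "[:- real r, 1:] * [:- real (Suc r), 1:] \<noteq> 0"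
    "degree ([:- real r, 1:] * [:- real (Suc r), 1:]) = 2"
    by (simp, subst degree_mult_eq) simp_all
  with "3.IH" show ?case
    by (simp only: run_poly.simps degree_mult_eq[OF pair(1) run_poly_nonzero]) simp
qed (simp_all add: degree_linear_power)

lemma lead_coeff_run_poly: "lead_coeff (run_poly r L) = 1"
  by (induction r L rule: run_poly.induct) (simp_all only: run_poly.simps lead_coeff_mult lead_coeff_power, simp_all)

lemma poly_run_poly:
  "poly (run_poly r L) (real m) \<ge> 0 \<and> (poly (run_poly r L) (real m) = 0 \<longleftrightarrow> r \<le> m \<and> m < r + L)"
proof (induction r L rule: run_poly.induct)
  case (3 r L)
  have "(real m - real r) * (real m - real (Suc r)) \<ge> 0"
    by (cases "m \<le> r") (auto intro: mult_nonpos_nonpos)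
  moreover have "(real m - real r) * (real m - real (Suc r)) = 0 \<longleftrightarrow> m = r \<or> m = Suc r"
    by auto
  moreover have "poly (run_poly r (Suc (Suc L))) (real m) =
      (real m - real r) * (real m - real (Suc r)) * poly (run_poly (Suc (Suc r)) L) (real m)"
    by (simp add: algebra_simps)
  ultimately show ?case
    using "3.IH" by (auto simp: mult_nonneg_nonneg)
qed auto

text \<open>The power of \<open>x\<close> that raises the degree to \<open>D + 1\<close> is harmless because \<open>0 \<notin> V\<close>.\<close>
lemma monic_cut_out_two_runs:
  assumes "0 \<notin> V" and "(L1 + L1 mod 2) + (L2 + L2 mod 2) \<le> D + 1"
  shows "monic_cut_out D V ({r1..<r1 + L1} \<union> {r2..<r2 + L2})"
proof -
  define pad where "pad = D + 1 - ((L1 + L1 mod 2) + (L2 + L2 mod 2))"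
  define P where "P = run_poly r1 L1 * run_poly r2 L2 * [:0, 1:] ^ pad"
  have "degree P = D + 1"
    using assms(2) by (simp add: P_def pad_def degree_mult_eq degree_linear_power[of 0, simplified]
        run_poly_nonzero degree_run_poly)
  moreover have "lead_coeff P = 1"
    unfolding P_def by (simp only: lead_coeff_mult lead_coeff_power lead_coeff_run_poly) simp
  moreover have "poly P (real v) \<ge> 0 \<and> (poly P (real v) = 0 \<longleftrightarrow> v \<in> {r1..<r1 + L1} \<union> {r2..<r2 + L2})"
    if "v \<in> V" for v
  proof -
    have "real v ^ pad > 0"
      using that assms(1) by (cases v) auto
    then show ?thesis
      using poly_run_poly[of r1 L1 v] poly_run_poly[of r2 L2 v]
      by (auto simp: P_def mult_nonneg_nonneg)
  qed
  ultimately show ?thesis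
    unfolding monic_cut_out_def by (intro exI[of _ P]) auto
qed

text \<open>If \<open>a\<close> and \<open>b\<close> are close, take one run of length \<open>k\<close> containing both; otherwise a run starting
  at \<open>a\<close> and a run ending at \<open>b\<close>, of lengths chosen (\<open>1 + (k - 1)\<close> or \<open>2 + (k - 2)\<close>) so that at most
  one of them is odd when \<open>k > 2\<close>. For \<open>k = 2\<close> the degree is \<open>4\<close>, which is where \<open>D \<ge> 3\<close> enters.\<close>
lemma exists_monic_cut_out_containing_pair:
  assumes "2 \<le> k" and "k \<le> D" and "3 \<le> D" and "k \<le> n" and "1 \<le> a" and "a < b" and "b \<le> n"
  obtains S where "S \<subseteq> {1..n}" "card S = k" "a \<in> S" "b \<in> S" "monic_cut_out D {1..n} S"
proof (cases "b < a + k")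
  case True
  define r where "r = min a (n + 1 - k)"
  have "{r..<r + k} \<subseteq> {1..n}" "r \<le> a" "b < r + k"
    using True assms by (auto simp: r_def)
  have "monic_cut_out D {1..n} ({r..<r + k} \<union> {0..<0 + 0})"
    using assms by (intro monic_cut_out_two_runs) auto
  moreover have "card {r..<r + k} = k" and "a \<in> {r..<r + k}" and "b \<in> {r..<r + k}"
    using \<open>r \<le> a\<close> \<open>b < r + k\<close> assms by auto
  ultimately show ?thesis
    using that \<open>{r..<r + k} \<subseteq> {1..n}\<close> by simp
next
  case False
  define L1 where "L1 = (if even k \<and> 4 \<le> k then 2 else (1::nat))"
  define L2 where "L2 = k - L1"
  have L: "1 \<le> L1" "1 \<le> L2" "L1 + L2 = k"
    using assms by (auto simp: L1_def L2_def)
  have "(L1 + L1 mod 2) + (L2 + L2 mod 2) \<le> D + 1"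
  proof (cases "even k \<and> 4 \<le> k")
    case True
    then have "L1 = 2" and "even L2"
      by (simp_all add: L1_def L2_def)
    then show ?thesis
      using L \<open>k \<le> D\<close> by simp
  next
    case False
    then have "L1 = 1"
      by (simp add: L1_def)
    consider "k = 2" | "odd k"
      using False \<open>2 \<le> k\<close> by (cases "k = 2 \<or> k = 3") auto
    then show ?thesis
    proof cases
      case 1
      then show ?thesis
        using \<open>L1 = 1\<close> \<open>3 \<le> D\<close> by (simp add: L2_def)
    next
      case 2
      then have "even L2"
        using \<open>L1 = 1\<close> \<open>2 \<le> k\<close> by (simp add: L2_def)
      then show ?thesis
        using \<open>L1 = 1\<close> L \<open>k \<le> D\<close> by simp
    qed
  qed
  moreover define r2 where "r2 = b + 1 - L2"
  have "a + L1 \<le> r2" and "r2 + L2 = b + 1"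
    using False L unfolding r2_def by linarith+
  ultimately have "monic_cut_out D {1..n} ({a..<a + L1} \<union> {r2..<r2 + L2})"
    using assms by (intro monic_cut_out_two_runs) auto
  moreover have "card ({a..<a + L1} \<union> {r2..<r2 + L2}) = k"
    using \<open>a + L1 \<le> r2\<close> L by (subst card_Un_disjoint) auto
  moreover have "{a..<a + L1} \<union> {r2..<r2 + L2} \<subseteq> {1..n}"
    using \<open>a + L1 \<le> r2\<close> \<open>r2 + L2 = b + 1\<close> assms by auto
  moreover have "a \<in> {a..<a + L1} \<union> {r2..<r2 + L2}" and "b \<in> {a..<a + L1} \<union> {r2..<r2 + L2}"
    using L \<open>r2 + L2 = b + 1\<close> by auto
  ultimately show ?thesis
    using that by blast
qed

section \<open>Strong colourings\<close>

definition covers_pairs :: "'v set \<Rightarrow> 'v set set \<Rightarrow> bool" where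
  "covers_pairs V E \<longleftrightarrow> (\<forall>a\<in>V. \<forall>b\<in>V. a \<noteq> b \<longrightarrow> (\<exists>e\<in>E. a \<in> e \<and> b \<in> e))"

lemma strong_coloring_by_enumeration:
  assumes "k_uniform k V E"
  shows "\<exists>\<kappa>. strong_coloring k V E (card V) \<kappa>"
proof -
  have "finite V"
    using assms by (simp add: k_uniform_def)
  then obtain h where h: "bij_betw h V {0..<card V}"
    using ex_bij_betw_finite_nat by blast
  define \<kappa> where "\<kappa> v = h v + 1" for v
  have "inj_on \<kappa> V"
    using h by (simp add: \<kappa>_def bij_betw_def inj_on_def)
  have "\<kappa> v \<in> {1..card V}" if "v \<in> V" for v
    using bij_betwE[OF h] that by (force simp: \<kappa>_def)
  moreover have "card (\<kappa> ` e) = k" if "e \<in> E" for e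
  proof -
    have "e \<subseteq> V" and "card e = k"
      using assms that by (auto simp: k_uniform_def)
    then show ?thesis
      using card_image inj_on_subset[OF \<open>inj_on \<kappa> V\<close>] by metis
  qed
  ultimately show ?thesis
    unfolding strong_coloring_def by blast
qed

lemma strong_chromatic_le_card:
  assumes "k_uniform k V E"
  shows "strong_chromatic k V E \<le> card V"
  unfolding strong_chromatic_def using strong_coloring_by_enumeration[OF assms] by (rule Least_le)

lemma card_le_colours_if_covers_pairs:
  assumes "k_uniform k V E" and "covers_pairs V E"
    and "strong_coloring k V E c \<kappa>"
  shows "card V \<le> c"
proof -
  have inj_edge: "inj_on \<kappa> e" if "e \<in> E" for e
  proof -
    have "finite e" and "card (\<kappa> ` e) = card e"
      using assms(1,3) that finite_subset by (auto simp: k_uniform_def strong_coloring_def)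
    then show ?thesis
      using inj_on_iff_eq_card by blast
  qed
  have "inj_on \<kappa> V"
  proof (rule inj_onI, rule ccontr)
    fix a b
    assume "a \<in> V" "b \<in> V" "\<kappa> a = \<kappa> b" "a \<noteq> b"
    then obtain e where "e \<in> E" "a \<in> e" "b \<in> e"
      using assms(2) unfolding covers_pairs_def by blast
    then show False
      using inj_edge \<open>\<kappa> a = \<kappa> b\<close> \<open>a \<noteq> b\<close> by (meson inj_onD)
  qed
  moreover have "\<kappa> ` V \<subseteq> {1..c}"
    using assms(3) by (auto simp: strong_coloring_def)
  ultimately show ?thesis
    using card_inj_on_le[of \<kappa> V "{1..c}"] by simp
qed

lemma strong_chromatic_eq_card_if_covers_pairs:
  assumes "k_uniform k V E" and "covers_pairs V E"
  shows "strong_chromatic k V E = card V"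
proof -
  have "\<exists>\<kappa>. strong_coloring k V E (strong_chromatic k V E) \<kappa>"
    unfolding strong_chromatic_def
    by (rule LeastI_ex) (use strong_coloring_by_enumeration[OF assms(1)] in blast)
  then obtain \<kappa> where "strong_coloring k V E (strong_chromatic k V E) \<kappa>" ..
  then show ?thesis
    using card_le_colours_if_covers_pairs[OF assms] strong_chromatic_le_card[OF assms(1)]
    by (simp add: le_antisym)
qed

section \<open>The cyclic hypergraph\<close>

definition cyclic_edges :: "nat \<Rightarrow> nat \<Rightarrow> nat \<Rightarrow> nat set set" where
  "cyclic_edges D k n = {S. S \<subseteq> {1..n} \<and> card S = k \<and> monic_cut_out D {1..n} S}"

lemma k_uniform_cyclic_edges: "k_uniform k {1..n} (cyclic_edges D k n)"
  by (auto simp: k_uniform_def cyclic_edges_def)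

lemma embeddable_cyclic_edges:
  assumes "k \<le> CARD('d::finite)"
  shows "embeddable TYPE('d) k {1..n} (cyclic_edges CARD('d) k n)"
proof -
  define \<phi> where "\<phi> = (\<lambda>v. moment_curve (real v) :: real^'d)"
  have inj: "inj_on \<phi> {1..n}"
    by (simp add: inj_on_def \<phi>_def inj_eq[OF inj_moment_curve])
  have "aff_dim (\<phi> ` e) = int k - 1" if "e \<in> cyclic_edges CARD('d) k n" for e
  proof -
    have "finite e" "card (real ` e) = k"
      using that finite_subset by (auto simp: cyclic_edges_def card_image)
    then show ?thesis
      using aff_dim_moment_curve[of "real ` e", where 'd='d] assms
      by (simp add: \<phi>_def image_image)
  qed
  moreover have "convex hull (\<phi> ` e1) \<inter> convex hull (\<phi> ` e2) = convex hull (\<phi> ` (e1 \<inter> e2))"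
    if "e1 \<in> cyclic_edges CARD('d) k n" and "e2 \<in> cyclic_edges CARD('d) k n" for e1 e2
  proof -
    let ?f = "\<lambda>v. real v ^ (CARD('d) + 1)"
    have "e1 \<subseteq> {1..n}" and "lifted_face ?f \<phi> {1..n} e1"
      and "e2 \<subseteq> {1..n}" and "lifted_face ?f \<phi> {1..n} e2"
      using that monic_cut_out_imp_lifted_face unfolding cyclic_edges_def \<phi>_def by blast+
    then show ?thesis
      using convex_hull_inter_lifted_faces[OF _ inj] by blast
  qed
  ultimately show ?thesis
    unfolding embeddable_def linear_embedding_def using k_uniform_cyclic_edges by blast
qed

lemma covers_pairs_cyclic_edges:
  assumes "2 \<le> k" and "k \<le> D" and "3 \<le> D" and "k \<le> n"
  shows "covers_pairs {1..n} (cyclic_edges D k n)"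
  unfolding covers_pairs_def
proof (intro ballI impI)
  have ordered: "\<exists>e\<in>cyclic_edges D k n. a \<in> e \<and> b \<in> e"
    if "a \<in> {1..n}" "b \<in> {1..n}" "a < b" for a b
    using exists_monic_cut_out_containing_pair[OF assms, of a b] that
    by (auto simp: cyclic_edges_def)
  fix a b
  assume "a \<in> {1..n}" "b \<in> {1..n}" "a \<noteq> b"
  then show "\<exists>e\<in>cyclic_edges D k n. a \<in> e \<and> b \<in> e"
    using ordered[of a b] ordered[of b a] by (cases "a < b") auto
qed

theorem mainTheorem12:
  fixes k n :: nat
  assumes "CARD('d::finite) \<ge> 3" and "2 \<le> k" and "k \<le> CARD('d)" and "n \<ge> CARD('d)"
  shows "chi_s TYPE('d) k n = n"
proof -
  let ?X = "{strong_chromatic k V E | (V :: nat set) E. embeddable TYPE('d) k V E \<and> card V = n}"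
  have bounded: "y \<le> n" if y: "y \<in> ?X" for y
  proof -
    obtain V :: "nat set" and E where "y = strong_chromatic k V E" "k_uniform k V E" "card V = n"
      using y unfolding embeddable_def by blast
    then show ?thesis
      using strong_chromatic_le_card[of k V E] by simp
  qed
  have "?X \<subseteq> {..n}"
    using bounded by (simp only: subset_iff atMost_iff) blast
  then have "finite ?X"
    using finite_atMost by (rule finite_subset)
  moreover have "strong_chromatic k {1..n} (cyclic_edges CARD('d) k n) = n"
    using strong_chromatic_eq_card_if_covers_pairs[OF k_uniform_cyclic_edges covers_pairs_cyclic_edges]
      assms
    by simp
  then have "n \<in> ?X"
    using embeddable_cyclic_edges[OF assms(3)] unfolding mem_Collect_eq
    by (intro exI[of _ "{1..n}"] exI[of _ "cyclic_edges CARD('d) k n"]) simp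
  ultimately show ?thesis
    unfolding chi_s_def using bounded by (intro Max_eqI)
qed

end
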